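(* Let $P$ be a full-dimensional integer polytope in $\mathbb{R}^d$ (all vertices in $\mathbb{Z}^d$). Then for every $0\le i\le d$, the quasi-coefficient $a_i(t)$ is periodic in $t$ with period $1$: $a_i(t+1)=a_i(t)$ for all real $t>0$.
   Context: $a_i(t) := \lim_{\epsilon\to 0^+}\sum_{\xi\in\mathbb{Z}^d}\sum_{\mathbf{T}: l(\mathbf{T})=d-i}\mathcal{R}_{\mathbf{T}}(\xi)\mathcal{E}_{\mathbf{T}}(t\xi)\mathbf{1}_{S(\mathbf{T})}(\xi)e^{-\pi\epsilon\|\xi\|^2}$ (these satisfy $A_P(t)=\sum_i a_i(t)t^i$ where $A_P(t)=\sum_{x\in\mathbb{Z}^d}\omega_{tP}(x)$). Notation: a rooted chain of length $k$ is $\mathbf{T}=(P=F_0\to\cdots\to F_k)$ with $F_j$ a facet of $F_{j-1}$, $l(\mathbf{T})=k$; $S(\mathbf{T})$ is the set of $\xi\in\mathbb{R}^d$ orthogonal to the tangent space of $F_k$ but not to that of $F_{k-1}$ ($\{0\}$ if $k=0$); $\mathrm{proj}_F$ is orthogonal projection onto the tangent space of $F$; $N_F(G)$ the outward unit normal of a facet $G$ of $F$ within the tangent space of $F$; $W_{(F,G)}(\xi)=\frac{-1}{2\pi i}\frac{\langle\mathrm{proj}_F\xi,N_F(G)\rangle}{\|\mathrm{proj}_F\xi\|^2}$; $\mathcal{R}_{\mathbf{T}}(\xi)=\mathrm{vol}(F_k)\prod_{j=1}^kW_{(F_{j-1},F_j)}(\xi)$ with $\mathrm{vol}$ the $(\dim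 F_k)$-dimensional Hausdorff measure; $\mathcal{E}_{\mathbf{T}}(\xi)=e^{-2\pi i\langle\xi,x_0\rangle}$ for $x_0\in F_k$. *)

theory Defs
  imports "HOL-Analysis.Analysis"
begin

definition int_lattice :: "'a::euclidean_space set" where
  "int_lattice = {x. \<forall>b\<in>Basis. x \<bullet> b \<in> \<int>}"

definition integer_polytope :: "'a::euclidean_space set \<Rightarrow> bool" where
  "integer_polytope P \<longleftrightarrow> polytope P \<and> (\<forall>v. v extreme_point_of P \<longrightarrow> v \<in> int_lattice)"

definition tangent_space :: "'a::euclidean_space set \<Rightarrow> 'a set" where
  "tangent_space F = span {x - y | x y. x \<in> F \<and> y \<in> F}"

definition proj_face :: "'a::euclidean_space set \<Rightarrow> 'a \<Rightarrow> 'a" where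
  "proj_face F \<xi> = (THE p. p \<in> tangent_space F \<and> (\<forall>v\<in>tangent_space F. (\<xi> - p) \<bullet> v = 0))"

definition outer_normal :: "'a::euclidean_space set \<Rightarrow> 'a set \<Rightarrow> 'a" where
  "outer_normal F G = (THE n. n \<in> tangent_space F \<and> norm n = 1 \<and>
      (\<forall>v\<in>tangent_space G. n \<bullet> v = 0) \<and> (\<forall>x\<in>F. \<forall>g\<in>G. n \<bullet> x \<le> n \<bullet> g))"

text \<open>s-dimensional Hausdorff measure (normalised so that it agrees with Lebesgue measure
  on s-dimensional affine subspaces; H^0 is counting measure).\<close>
definition hausdorff_measure :: "nat \<Rightarrow> 'a::euclidean_space set \<Rightarrow> ennreal" where
  "hausdorff_measure s A =
     (SUP \<delta>\<in>{0<..}. INF U\<in>{U :: nat \<Rightarrow> 'a set. A \<subseteq> (\<Union>n. U n) \<and> (\<forall>n. diameter (U n) \<le> \<delta>)}.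
        (\<Sum>n. if U n = {} then 0
              else ennreal (unit_ball_vol (real s) / 2 ^ s * diameter (U n) ^ s)))"

definition face_vol :: "'a::euclidean_space set \<Rightarrow> real" where
  "face_vol F = enn2real (hausdorff_measure (nat (aff_dim F)) F)"

text \<open>Rooted chains P = F_0 -> F_1 -> ... -> F_k, represented by the list [F_1,...,F_k].\<close>
definition rooted_chain :: "'a::euclidean_space set \<Rightarrow> 'a set list \<Rightarrow> bool" where
  "rooted_chain P Fs \<longleftrightarrow> (\<forall>j<length Fs. (Fs ! j) facet_of ((P # Fs) ! j))"

definition chains_of_length :: "'a::euclidean_space set \<Rightarrow> nat \<Rightarrow> 'a set list set" where
  "chains_of_length P k = {Fs. length Fs = k \<and> rooted_chain P Fs}"

definition chain_face :: "'a::euclidean_space set \<Rightarrow> 'a set list \<Rightarrow> nat \<Rightarrow> 'a set" where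
  "chain_face P Fs j = (P # Fs) ! j"

definition orth_to :: "'a::euclidean_space \<Rightarrow> 'a set \<Rightarrow> bool" where
  "orth_to \<xi> F \<longleftrightarrow> (\<forall>v\<in>tangent_space F. \<xi> \<bullet> v = 0)"

definition chain_S :: "'a::euclidean_space set \<Rightarrow> 'a set list \<Rightarrow> 'a set" where
  "chain_S P Fs = (if Fs = [] then {0}
     else {\<xi>. orth_to \<xi> (chain_face P Fs (length Fs)) \<and>
              \<not> orth_to \<xi> (chain_face P Fs (length Fs - 1))})"

definition W_fun :: "'a::euclidean_space set \<Rightarrow> 'a set \<Rightarrow> 'a \<Rightarrow> complex" where
  "W_fun F G \<xi> = (-1 / (2 * pi * \<i>)) *
      complex_of_real ((proj_face F \<xi> \<bullet> outer_normal F G) / (norm (proj_face F \<xi>))\<^sup>2)"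

definition R_fun :: "'a::euclidean_space set \<Rightarrow> 'a set list \<Rightarrow> 'a \<Rightarrow> complex" where
  "R_fun P Fs \<xi> = complex_of_real (face_vol (chain_face P Fs (length Fs))) *
      (\<Prod>j\<in>{1..length Fs}. W_fun (chain_face P Fs (j - 1)) (chain_face P Fs j) \<xi>)"

definition E_fun :: "'a::euclidean_space set \<Rightarrow> 'a set list \<Rightarrow> 'a \<Rightarrow> complex" where
  "E_fun P Fs \<xi> = exp (- 2 * pi * \<i> * complex_of_real (\<xi> \<bullet> (SOME x0. x0 \<in> chain_face P Fs (length Fs))))"

definition quasi_coeff :: "'a::euclidean_space set \<Rightarrow> nat \<Rightarrow> real \<Rightarrow> complex" where
  "quasi_coeff P i t = Lim (at_right (0::real)) (\<lambda>\<epsilon>.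
      infsum (\<lambda>\<xi>. \<Sum>Fs\<in>chains_of_length P (DIM('a) - i).
          R_fun P Fs \<xi> * E_fun P Fs (t *\<^sub>R \<xi>) * indicator (chain_S P Fs) \<xi> *
          complex_of_real (exp (- pi * \<epsilon> * (norm \<xi>)\<^sup>2)))
        (int_lattice :: 'a set))"

end

theory Submission
  imports Defs
begin

(* On S(T) the frequency \<xi> is orthogonal to the last face F_k, so <\<xi>, x0> = <\<xi>, v> for any
   vertex v of F_k. As v is a lattice point, <\<xi>, x0> is an integer for \<xi> in Z^d, hence
   E_T((t+1)\<xi>) = E_T(t\<xi>) E_T(\<xi>) = E_T(t\<xi>). Every summand of the regularised lattice sum,
   and therefore a_i itself, is unchanged by t \<mapsto> t + 1. *)

lemma chain_face_face_of:
  assumes "convex P" "rooted_chain P Fs" "j \<le> length Fs"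
  shows "chain_face P Fs j face_of P"
  using assms(3)
proof (induction j)
  case 0
  show ?case using assms(1) by (simp add: chain_face_def face_of_refl)
next
  case (Suc j)
  then have "Fs ! j facet_of chain_face P Fs j"
    using assms(2) by (simp add: rooted_chain_def chain_face_def)
  then show ?case
    using Suc by (auto simp: chain_face_def intro: face_of_trans facet_of_imp_face_of)
qed

lemma chain_face_last_nonempty:
  assumes "rooted_chain P Fs" "Fs \<noteq> []"
  shows "chain_face P Fs (length Fs) \<noteq> {}"
proof -
  have "Fs ! (length Fs - 1) facet_of (P # Fs) ! (length Fs - 1)"
    using assms unfolding rooted_chain_def by simp
  then show ?thesis
    using assms(2) by (simp add: chain_face_def facet_of_def nth_Cons')
qed

lemma inner_int_lattice:
  assumes "x \<in> int_lattice" "y \<in> int_lattice"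
  shows "x \<bullet> y \<in> \<int>"
proof -
  have "x \<bullet> y = (\<Sum>b\<in>Basis. (x \<bullet> b) * (y \<bullet> b))" by (rule euclidean_inner)
  also have "\<dots> \<in> \<int>" using assms unfolding int_lattice_def by (intro Ints_sum Ints_mult) auto
  finally show ?thesis .
qed

lemma integer_polytope_face_meets_lattice:
  assumes "integer_polytope P" "F face_of P" "F \<noteq> {}"
  obtains v where "v \<in> F" "v \<in> int_lattice"
proof -
  have "polytope F"
    using assms(1,2) face_of_polytope_polytope integer_polytope_def by blast
  then obtain v where "v extreme_point_of F"
    using assms(3) extreme_point_exists_convex polytope_imp_compact polytope_imp_convex by blast
  then have "v \<in> F" "v extreme_point_of P"
    using assms(2) extreme_point_of_face by auto
  then show thesis
    using assms(1) that by (simp add: integer_polytope_def)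
qed

lemma orth_to_inner_eq:
  assumes "orth_to \<xi> F" "x \<in> F" "y \<in> F"
  shows "\<xi> \<bullet> x = \<xi> \<bullet> y"
proof -
  have "x - y \<in> tangent_space F"
    unfolding tangent_space_def using assms(2,3) by (intro span_base) blast
  then have "\<xi> \<bullet> (x - y) = 0"
    using assms(1) by (simp add: orth_to_def)
  then show ?thesis
    by (simp add: inner_diff_right)
qed

lemma E_fun_add: "E_fun P Fs (\<xi> + \<eta>) = E_fun P Fs \<xi> * E_fun P Fs \<eta>"
  by (simp add: E_fun_def inner_add_left ring_distribs exp_add[symmetric])

lemma E_fun_lattice_eq_1:
  assumes "integer_polytope P" "rooted_chain P Fs" "\<xi> \<in> int_lattice" "\<xi> \<in> chain_S P Fs"
  shows "E_fun P Fs \<xi> = 1"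
proof (cases "Fs = []")
  case True
  then show ?thesis using assms(4) by (simp add: chain_S_def E_fun_def)
next
  case False
  define F where "F = chain_face P Fs (length Fs)"
  have "F face_of P"
    using assms(1,2) chain_face_face_of F_def integer_polytope_def polytope_imp_convex by blast
  moreover have "F \<noteq> {}"
    using assms(2) False chain_face_last_nonempty F_def by blast
  ultimately obtain v where v: "v \<in> F" "v \<in> int_lattice"
    using assms(1) integer_polytope_face_meets_lattice by blast
  have "(SOME x0. x0 \<in> F) \<in> F"
    using v(1) by (rule someI)
  moreover have "orth_to \<xi> F"
    using assms(4) False by (simp add: chain_S_def F_def)
  ultimately have "\<xi> \<bullet> (SOME x0. x0 \<in> F) = \<xi> \<bullet> v"
    using v(1) orth_to_inner_eq by blast
  also have "\<xi> \<bullet> v \<in> \<int>"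
    using assms(3) v(2) by (rule inner_int_lattice)
  finally obtain n :: int where "\<xi> \<bullet> (SOME x0. x0 \<in> F) = of_int n"
    by (elim Ints_cases)
  then show ?thesis
    using exp_integer_2pi[of "of_int (- n)"] by (simp add: E_fun_def F_def[symmetric] mult_ac)
qed

theorem theorem7p1:
  fixes P :: "'a::euclidean_space set"
  assumes "integer_polytope P"
    and "aff_dim P = int DIM('a)"
    and "i \<le> DIM('a)"
    and "t > 0"
  shows "quasi_coeff P i (t + 1) = quasi_coeff P i t"
proof -
  have summand_periodic:
    "E_fun P Fs ((t + 1) *\<^sub>R \<xi>) * indicator (chain_S P Fs) \<xi>
      = E_fun P Fs (t *\<^sub>R \<xi>) * indicator (chain_S P Fs) \<xi>"
    if "\<xi> \<in> int_lattice" "Fs \<in> chains_of_length P k" for \<xi> :: 'a and Fs k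
  proof (cases "\<xi> \<in> chain_S P Fs")
    case True
    with that assms(1) have "E_fun P Fs \<xi> = 1"
      by (intro E_fun_lattice_eq_1) (auto simp: chains_of_length_def)
    then show ?thesis
      using E_fun_add[of P Fs "t *\<^sub>R \<xi>" \<xi>] by (simp add: scaleR_add_left)
  qed simp
  show ?thesis
    unfolding quasi_coeff_def
    by (intro arg_cong[where f = "Lim _"] ext infsum_cong sum.cong refl)
      (simp add: mult.assoc summand_periodic)
qed

end
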